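(* Let $p\geq 2$ be an integer, and for integers $i\ge 0$ and $0\le r\le p-1$ set \[ \theta(i,r)=\frac{p i^2+(p+2r+2)i+2r+2}{(ip+r+1)(ip+p+r+1)(ip+r+2)(ip+p+r)} . \] Then \[ c_0\!\left(\frac{1}{p}\right)=\frac{p(p-1)(p-2)}{2\pi}\sum_{i\geq 0}\sum_{r=0}^{p-1}\theta(i,r). \]
   Context: For a positive integer $p$ and an integer $q$ with $1\le q\le p-1$ and $\gcd(p,q)=1$, the cotangent sum is $c_0\!\left(\frac{q}{p}\right)=-\sum_{k=1}^{p-1}\frac{k}{p}\cot\frac{\pi k q}{p}$. *)

theory Defs
  imports "HOL-Analysis.Analysis"
begin

definition c0 :: "nat \<Rightarrow> nat \<Rightarrow> real" where
  "c0 q p = - (\<Sum>k = 1..p - 1. (real k / real p) * cot (pi * real k * real q / real p))"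

definition theta :: "nat \<Rightarrow> nat \<Rightarrow> nat \<Rightarrow> real" where
  "theta p i r =
     (real p * real i ^ 2 + (real p + 2 * real r + 2) * real i + 2 * real r + 2) /
     ((real i * real p + real r + 1) * (real i * real p + real p + real r + 1) *
      (real i * real p + real r + 2) * (real i * real p + real p + real r))"

end

theory Submission
  imports Defs
begin

text \<open>
  The reflection formula for the digamma function gives the partial fraction expansion
  \<open>\<pi> cot (\<pi> x) = \<Sum>\<^sub>n (1 / (x + n) - 1 / (1 - x + n))\<close>, so \<open>\<pi> c\<^sub>0(1/p)\<close> is a series in \<open>n\<close>
  whose terms are combinations of the reciprocals \<open>1 / (n p + k)\<close>.  Splitting \<open>\<theta>(i, r)\<close> into
  partial fractions, its sum over \<open>r < p\<close> is expressed through the block sums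
  \<open>\<Sum>\<^sub>r 1 / (i p + r + 1)\<close> and \<open>\<Sum>\<^sub>r 1 / ((i + 1) p + r + 1)\<close>.  Comparing, the \<open>i\<close>-th block
  of the \<open>\<theta>\<close>-series, scaled by \<open>p (p - 1) (p - 2) / 2\<close>, equals the \<open>i\<close>-th term of the
  cotangent series up to a telescoping difference of a potential whose limit at infinity is its
  value at \<open>0\<close>.
\<close>

lemma Digamma_reflection_complex:
  fixes z :: complex
  assumes "z \<notin> \<int>"
  shows "Digamma (1 - z) - Digamma z = of_real pi * cot (of_real pi * z)"
proof -
  have poles: "z \<notin> \<int>\<^sub>\<le>\<^sub>0" "1 - z \<notin> \<int>\<^sub>\<le>\<^sub>0"
    using assms Ints_diff[of 1 "1 - z"] nonpos_Ints_subset_Ints by auto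
  have sin: "sin (of_real pi * z) \<noteq> 0"
    using assms by (auto simp: sin_eq_0)
  have "((\<lambda>z. Gamma z * Gamma (1 - z)) has_field_derivative
          Gamma z * Gamma (1 - z) * (Digamma z - Digamma (1 - z))) (at z)"
    using poles by (auto intro!: derivative_eq_intros simp: algebra_simps)
  moreover have "((\<lambda>z. Gamma z * Gamma (1 - z)) has_field_derivative
          Gamma z * Gamma (1 - z) * - (of_real pi * cot (of_real pi * z))) (at z)"
    unfolding Gamma_reflection_complex using sin
    by (auto intro!: derivative_eq_intros simp: cot_def power2_eq_square field_simps)
  ultimately have "Gamma z * Gamma (1 - z) * (Digamma z - Digamma (1 - z))
      = Gamma z * Gamma (1 - z) * - (of_real pi * cot (of_real pi * z))"
    by (rule DERIV_unique)
  moreover have "Gamma z * Gamma (1 - z) \<noteq> 0"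
    using sin by (simp add: Gamma_reflection_complex)
  ultimately have "Digamma z - Digamma (1 - z) = - (of_real pi * cot (of_real pi * z))"
    by (metis mult_left_cancel)
  thus ?thesis
    by (simp add: algebra_simps)
qed

lemma Digamma_reflection_real:
  fixes x :: real
  assumes "0 < x" "x < 1"
  shows "Digamma (1 - x) - Digamma x = pi * cot (pi * x)"
proof -
  have "x \<notin> \<int>"
    using assms by (auto elim!: Ints_cases)
  hence "complex_of_real (Digamma (1 - x) - Digamma x) = of_real (pi * cot (pi * x))"
    using Digamma_reflection_complex[of "of_real x"] assms
    by (simp add: Polygamma_of_real [symmetric] cot_of_real)
  thus ?thesis
    by (simp only: of_real_eq_iff)
qed

lemma cot_partial_fractions_LIMSEQ:
  fixes x :: real
  assumes "0 < x" "x < 1"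
  shows "(\<lambda>m. \<Sum>n<m. 1 / (x + real n) - 1 / (1 - x + real n)) \<longlonglongrightarrow> pi * cot (pi * x)"
proof -
  have "(\<lambda>m. (ln (real m) - (\<Sum>n<m. inverse (1 - x + real n)))
             - (ln (real m) - (\<Sum>n<m. inverse (x + real n))))
        \<longlonglongrightarrow> Digamma (1 - x) - Digamma x"
    using assms Digamma_LIMSEQ[of x] Digamma_LIMSEQ[of "1 - x"] by (intro tendsto_diff) auto
  thus ?thesis
    by (simp add: Digamma_reflection_real[OF assms] sum_subtractf inverse_eq_divide)
qed

definition c0_series_term :: "nat \<Rightarrow> nat \<Rightarrow> real" where
  "c0_series_term p n =
     (\<Sum>k = 1..p - 1. real k / (real n * real p + real p - real k) - real k / (real n * real p + real k))"

lemma c0_series_LIMSEQ: "(\<lambda>N. \<Sum>n<N. c0_series_term p n) \<longlonglongrightarrow> pi * c0 1 p"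
proof -
  have summand: "real k / real p * - (1 / (real k / real p + real n) - 1 / (1 - real k / real p + real n))
      = real k / (real n * real p + real p - real k) - real k / (real n * real p + real k)"
    if "k \<in> {1..p - 1}" for k n
  proof -
    from that have "1 \<le> real k" "real k < real p" "0 < real p"
      by auto
    moreover have "0 \<le> real n * real p"
      by simp
    ultimately have pos: "0 < real n * real p + real k" "0 < real n * real p + real p - real k"
      by linarith+
    have inv: "1 / (real k / real p + real n) = real p / (real n * real p + real k)"
      "1 / (1 - real k / real p + real n) = real p / (real n * real p + real p - real k)"
      using pos \<open>0 < real p\<close> by (simp_all add: field_simps)
    show ?thesis
      unfolding inv using \<open>0 < real p\<close> by (simp add: right_diff_distrib)
  qed
  have "(\<lambda>N. \<Sum>k = 1..p - 1. real k / real p *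
           - (\<Sum>n<N. 1 / (real k / real p + real n) - 1 / (1 - real k / real p + real n)))
        \<longlonglongrightarrow> (\<Sum>k = 1..p - 1. real k / real p * - (pi * cot (pi * (real k / real p))))"
    by (intro tendsto_intros cot_partial_fractions_LIMSEQ) auto
  moreover have "(\<Sum>k = 1..p - 1. real k / real p * - (pi * cot (pi * (real k / real p)))) = pi * c0 1 p"
    by (simp add: c0_def sum_distrib_left sum_negf mult_ac)
  moreover have "(\<Sum>k = 1..p - 1. real k / real p *
           - (\<Sum>n<N. 1 / (real k / real p + real n) - 1 / (1 - real k / real p + real n)))
      = (\<Sum>n<N. c0_series_term p n)" for N
    unfolding c0_series_term_def
    by (simp only: sum_distrib_left sum_negf[symmetric] mult_minus_right[symmetric] summand
        sum.swap[of _ "{..<N}"] cong: sum.cong)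
  ultimately show ?thesis
    by simp
qed

lemma sum_lessThan_shift_Suc:
  fixes f :: "nat \<Rightarrow> 'a :: ab_group_add"
  shows "(\<Sum>r<n. f (Suc r)) = (\<Sum>r<n. f r) - f 0 + f n"
  using sum.lessThan_Suc_shift[of f n] sum.lessThan_Suc[of f n] by (simp add: algebra_simps)

definition block_harm :: "nat \<Rightarrow> nat \<Rightarrow> real" where
  "block_harm p i = (\<Sum>r<p. 1 / (real i * real p + real r + 1))"

lemma c0_series_term_block_harm:
  assumes "0 < p"
  shows "c0_series_term p i = (2 * real i * real p + real p) * block_harm p i - 2 * real p + 1 / (real i + 1)"
proof -
  define x where "x = real i * real p"
  have "0 \<le> x"
    by (simp add: x_def)
  with assms have "x + real p \<noteq> 0"
    by linarith
  have "{..<p} = insert 0 {1..p - 1}"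
    using assms by auto
  hence "c0_series_term p i = (\<Sum>k<p. real k / (x + real p - real k)) - (\<Sum>k<p. real k / (x + real k))"
    by (simp add: c0_series_term_def x_def sum_subtractf)
  also have "(\<Sum>k<p. real k / (x + real p - real k)) = (\<Sum>j<p. (real p - real j - 1) / (x + real j + 1))"
    by (subst sum.nat_diff_reindex[symmetric]) (simp add: of_nat_diff algebra_simps)
  also have "(\<Sum>k<p. real k / (x + real k)) = (\<Sum>j<p. (real j + 1) / (x + real j + 1)) - real p / (x + real p)"
    using sum_lessThan_shift_Suc[of "\<lambda>k. real k / (x + real k)" p] by (simp add: algebra_simps)
  also have "(\<Sum>j<p. (real p - real j - 1) / (x + real j + 1))
      - ((\<Sum>j<p. (real j + 1) / (x + real j + 1)) - real p / (x + real p))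
      = (\<Sum>j<p. (2 * x + real p) * (1 / (x + real j + 1)) - 2) + real p / (x + real p)"
  proof -
    have "(real p - real j - 1) / (x + real j + 1) - (real j + 1) / (x + real j + 1)
        = (2 * x + real p) * (1 / (x + real j + 1)) - 2" for j
    proof -
      have "x + real j + 1 \<noteq> 0"
        using \<open>0 \<le> x\<close> by linarith
      thus ?thesis
        by (simp add: diff_divide_distrib[symmetric] divide_simps)
    qed
    thus ?thesis
      by (simp add: sum_subtractf[symmetric])
  qed
  also have "\<dots> = (2 * x + real p) * block_harm p i - 2 * real p + 1 / (real i + 1)"
    using \<open>x + real p \<noteq> 0\<close> by (simp add: block_harm_def x_def sum_subtractf sum_distrib_left field_simps)
  finally show ?thesis
    by (simp add: x_def)
qed

lemma theta_partial_fractions: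
  fixes P I Q d1 d2 d3 d4 :: real
  assumes d1: "d1 = I * P + Q + 1" and d2: "d2 = I * P + P + Q + 1"
    and d3: "d3 = I * P + Q + 2" and d4: "d4 = I * P + P + Q"
    and nz: "d1 \<noteq> 0" "d2 \<noteq> 0" "d3 \<noteq> 0" "d4 \<noteq> 0"
  shows "P * (P - 1) * (P - 2) / 2 * ((P * I\<^sup>2 + (P + 2 * Q + 2) * I + 2 * Q + 2) / (d1 * d2 * d3 * d4))
     = P * (P - 2) / 2 * (- I * (I + 1)) * (1 / d1) + P * (P - 2) / 2 * ((I + 1) * (I + 2)) * (1 / d2)
     + P / 2 * (I + 1) * (P * I + 2) * (1 / d3) + P / 2 * (I + 1) * (2 - 2 * P - P * I) * (1 / d4)"
  using nz by (simp add: field_simps) (use d1 d2 d3 d4 in algebra)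

text \<open>The reciprocals (and \<open>1 / 2\<close>) are the variables \<open>x1, \<dots>, y, h\<close>, so that the identity
  is a polynomial consequence of the hypotheses, which \<open>algebra\<close> decides by a Groebner basis
  computation.\<close>

lemma theta_telescoping_identity:
  fixes P I a b x1 x2 x3 x4 y h :: real
  assumes "x1 * (I * P + 1) = 1" "x2 * (I * P + P + 1) = 1" "x3 * (I * P + P) = 1"
    "x4 * (I * P + 2 * P) = 1" "y * (I + 2) = 1" "h * 2 = 1"
  shows "P * (P - 2) * h * (- I * (I + 1)) * a + P * (P - 2) * h * ((I + 1) * (I + 2)) * b
     + P * h * (I + 1) * (P * I + 2) * (a - x1 + x2)
     + P * h * (I + 1) * (2 - 2 * P - P * I) * (b + x3 - x4)
   = (2 * I * P + P) * a - 2 * P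
     + (P * I\<^sup>2 * a - P * I - (P - 1) * h * x1)
     - (P * (I + 1)\<^sup>2 * b - P * (I + 1) - y - (P - 1) * h * x2)"
  using assms by algebra

definition theta_potential :: "nat \<Rightarrow> nat \<Rightarrow> real" where
  "theta_potential p i = real p * real i ^ 2 * block_harm p i - real p * real i - 1 / (real i + 1)
     - (real p - 1) / 2 * (1 / (real i * real p + 1))"

lemma sum_theta_block_harm:
  fixes p i :: nat
  defines "P \<equiv> real p" and "I \<equiv> real i"
  assumes "0 < p"
  shows "P * (P - 1) * (P - 2) / 2 * (\<Sum>r<p. theta p i r)
     = P * (P - 2) / 2 * (- I * (I + 1)) * block_harm p i
     + P * (P - 2) / 2 * ((I + 1) * (I + 2)) * block_harm p (Suc i)
     + P / 2 * (I + 1) * (P * I + 2) * (block_harm p i - 1 / (I * P + 1) + 1 / (I * P + P + 1))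
     + P / 2 * (I + 1) * (2 - 2 * P - P * I) * (block_harm p (Suc i) + 1 / (I * P + P) - 1 / (I * P + 2 * P))"
proof -
  have "0 < P" "0 \<le> I * P"
    using assms by (simp_all add: P_def I_def)
  have pf: "P * (P - 1) * (P - 2) / 2 * theta p i r
     = P * (P - 2) / 2 * (- I * (I + 1)) * (1 / (I * P + real r + 1))
     + P * (P - 2) / 2 * ((I + 1) * (I + 2)) * (1 / (I * P + P + real r + 1))
     + P / 2 * (I + 1) * (P * I + 2) * (1 / (I * P + real r + 2))
     + P / 2 * (I + 1) * (2 - 2 * P - P * I) * (1 / (I * P + P + real r))" for r
    unfolding theta_def P_def [symmetric] I_def [symmetric]
    using \<open>0 < P\<close> \<open>0 \<le> I * P\<close> by (intro theta_partial_fractions) auto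
  have sum1: "(\<Sum>r<p. 1 / (I * P + real r + 1)) = block_harm p i"
    unfolding block_harm_def P_def I_def ..
  have sum2: "(\<Sum>r<p. 1 / (I * P + P + real r + 1)) = block_harm p (Suc i)"
    unfolding block_harm_def P_def I_def by (simp add: algebra_simps)
  have sum3: "(\<Sum>r<p. 1 / (I * P + real r + 2)) = block_harm p i - 1 / (I * P + 1) + 1 / (I * P + P + 1)"
    using sum_lessThan_shift_Suc[of "\<lambda>r. 1 / (I * P + real r + 1)" p]
    unfolding block_harm_def P_def I_def by (simp add: algebra_simps)
  have sum4: "(\<Sum>r<p. 1 / (I * P + P + real r)) = block_harm p (Suc i) + 1 / (I * P + P) - 1 / (I * P + 2 * P)"
    using sum_lessThan_shift_Suc[of "\<lambda>r. 1 / (I * P + P + real r)" p]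
    unfolding block_harm_def P_def I_def by (simp add: algebra_simps)
  have "P * (P - 1) * (P - 2) / 2 * (\<Sum>r<p. theta p i r)
     = P * (P - 2) / 2 * (- I * (I + 1)) * (\<Sum>r<p. 1 / (I * P + real r + 1))
     + P * (P - 2) / 2 * ((I + 1) * (I + 2)) * (\<Sum>r<p. 1 / (I * P + P + real r + 1))
     + P / 2 * (I + 1) * (P * I + 2) * (\<Sum>r<p. 1 / (I * P + real r + 2))
     + P / 2 * (I + 1) * (2 - 2 * P - P * I) * (\<Sum>r<p. 1 / (I * P + P + real r))"
    by (simp only: sum_distrib_left pf sum.distrib)
  thus ?thesis
    unfolding sum1 sum2 sum3 sum4 .
qed

lemma theta_block_telescoping:
  assumes "0 < p"
  shows "real p * (real p - 1) * (real p - 2) / 2 * (\<Sum>r<p. theta p i r)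
    = c0_series_term p i + theta_potential p i - theta_potential p (Suc i)"
proof -
  define P I where "P = real p" and "I = real i"
  have "0 < P" "0 \<le> I" "0 \<le> I * P"
    using assms by (simp_all add: P_def I_def)
  hence nz: "I * P + 1 \<noteq> 0" "I * P + P + 1 \<noteq> 0" "I * P + P \<noteq> 0" "I * P + 2 * P \<noteq> 0" "I + 2 \<noteq> 0"
    by linarith+
  have "real p * (real p - 1) * (real p - 2) / 2 * (\<Sum>r<p. theta p i r)
     = P * (P - 2) / 2 * (- I * (I + 1)) * block_harm p i
     + P * (P - 2) / 2 * ((I + 1) * (I + 2)) * block_harm p (Suc i)
     + P / 2 * (I + 1) * (P * I + 2) * (block_harm p i - 1 / (I * P + 1) + 1 / (I * P + P + 1))
     + P / 2 * (I + 1) * (2 - 2 * P - P * I) * (block_harm p (Suc i) + 1 / (I * P + P) - 1 / (I * P + 2 * P))"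
    unfolding P_def I_def using assms by (rule sum_theta_block_harm)
  also have "\<dots> = c0_series_term p i + theta_potential p i - theta_potential p (Suc i)"
  proof -
    have "c0_series_term p i = (2 * I * P + P) * block_harm p i - 2 * P + 1 / (I + 1)"
      using c0_series_term_block_harm[OF assms] by (simp add: P_def I_def)
    moreover have "theta_potential p i
        = P * I\<^sup>2 * block_harm p i - P * I - 1 / (I + 1) - (P - 1) / 2 * (1 / (I * P + 1))"
      by (simp add: theta_potential_def P_def I_def)
    moreover have "theta_potential p (Suc i) = P * (I + 1)\<^sup>2 * block_harm p (Suc i) - P * (I + 1)
        - 1 / (I + 2) - (P - 1) / 2 * (1 / (I * P + P + 1))"
      by (simp add: theta_potential_def P_def I_def algebra_simps)
    moreover note theta_telescoping_identity[of "1 / (I * P + 1)" I P "1 / (I * P + P + 1)"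
        "1 / (I * P + P)" "1 / (I * P + 2 * P)" "1 / (I + 2)" "1 / 2" "block_harm p i" "block_harm p (Suc i)"]
    ultimately show ?thesis
      using nz by simp
  qed
  finally show ?thesis .
qed

lemma theta_nonneg: "0 \<le> theta p i r"
  unfolding theta_def by (intro divide_nonneg_nonneg mult_nonneg_nonneg) auto

lemma theta_le:
  assumes "0 < p"
  shows "theta p i r \<le> 2 / (real i + 1)\<^sup>2"
proof -
  define P I Q where "P = real p" and "I = real i" and "Q = real r"
  define d1 where "d1 = I * P + Q + 1"
  have "1 \<le> P" "0 \<le> I" "0 \<le> Q"
    using assms by (simp_all add: P_def I_def Q_def)
  hence "I \<le> I * P"
    using mult_left_mono[of 1 P I] by simp
  hence "0 < d1"
    using \<open>0 \<le> I\<close> \<open>0 \<le> Q\<close> by (simp add: d1_def)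
  have "(I + 1) ^ 3 \<le> (I * P + P + Q + 1) * (I * P + Q + 2) * (I * P + P + Q)"
    unfolding power3_eq_cube
    using \<open>0 \<le> I\<close> \<open>0 \<le> Q\<close> \<open>1 \<le> P\<close> \<open>I \<le> I * P\<close> by (intro mult_mono) auto
  hence den: "d1 * (I + 1) ^ 3 \<le> d1 * (I * P + P + Q + 1) * (I * P + Q + 2) * (I * P + P + Q)"
    using \<open>0 < d1\<close> by (simp add: mult.assoc)
  have "2 * (I + 1) * d1 = (P * I\<^sup>2 + (P + 2 * Q + 2) * I + 2 * Q + 2) + (I * I * P + I * P)"
    by (simp add: d1_def algebra_simps power2_eq_square)
  hence num: "P * I\<^sup>2 + (P + 2 * Q + 2) * I + 2 * Q + 2 \<le> 2 * (I + 1) * d1"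
    using \<open>0 \<le> I\<close> \<open>1 \<le> P\<close> by simp
  have "theta p i r \<le> 2 * (I + 1) * d1 / (d1 * (I + 1) ^ 3)"
    unfolding theta_def P_def [symmetric] I_def [symmetric] Q_def [symmetric] d1_def [symmetric]
    using num den \<open>0 < d1\<close> \<open>0 \<le> I\<close> by (intro frac_le) simp_all
  also have "\<dots> = 2 / (I + 1)\<^sup>2"
    using \<open>0 < d1\<close> \<open>0 \<le> I\<close> by (simp add: divide_simps power3_eq_cube power2_eq_square)
  finally show ?thesis
    by (simp add: I_def)
qed

lemma summable_theta_block:
  assumes "0 < p"
  shows "summable (\<lambda>i. \<Sum>r<p. theta p i r)"
proof (rule summable_comparison_test')
  have "summable (\<lambda>i. inverse (real (Suc i) ^ 2))"
    using summable_Suc_iff[of "\<lambda>n. inverse (real n ^ 2)"] inverse_power_summable[of 2] by simp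
  thus "summable (\<lambda>i. real p * (2 / (real i + 1)\<^sup>2))"
    by (simp add: divide_inverse add.commute summable_mult)
  show "norm (\<Sum>r<p. theta p i r) \<le> real p * (2 / (real i + 1)\<^sup>2)" for i
    using theta_nonneg theta_le[OF assms] sum_mono[of "{..<p}" "theta p i" "\<lambda>_. 2 / (real i + 1)\<^sup>2"]
    by (simp add: sum_nonneg)
qed

lemma LIMSEQ_linear_fraction:
  fixes a b q c :: real
  assumes "0 < q" "0 \<le> c"
  shows "(\<lambda>N. (a * real N + b) / (q * real N + c)) \<longlonglongrightarrow> a / q"
proof -
  have "(\<lambda>N. (a + b / real N) / (q + c / real N)) \<longlonglongrightarrow> (a + 0) / (q + 0)"
    using assms by (intro tendsto_intros) auto
  moreover have "\<forall>\<^sub>F N in sequentially. (a + b / real N) / (q + c / real N) = (a * real N + b) / (q * real N + c)"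
    using eventually_gt_at_top[of "0::nat"]
  proof eventually_elim
    case (elim N)
    hence "a + b / real N = (a * real N + b) / real N" "q + c / real N = (q * real N + c) / real N"
      by (simp_all add: field_simps)
    with elim show ?case
      by simp
  qed
  ultimately show ?thesis
    by (simp add: Lim_transform_eventually)
qed

lemma theta_potential_LIMSEQ:
  assumes "0 < p"
  shows "(\<lambda>N. theta_potential p N) \<longlonglongrightarrow> theta_potential p 0"
proof -
  have "theta_potential p N = - (\<Sum>r<p. ((real r + 1) * real N + 0) / (real p * real N + (real r + 1)))
      - (0 * real N + 1) / (1 * real N + 1) - (real p - 1) / 2 * ((0 * real N + 1) / (real p * real N + 1))"
    for N
  proof -
    have "real p * real N ^ 2 * block_harm p N - real p * real N
        = (\<Sum>r<p. real p * real N ^ 2 * (1 / (real N * real p + real r + 1)) - real N)"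
      by (simp add: block_harm_def sum_subtractf sum_distrib_left)
    also have "\<dots> = - (\<Sum>r<p. ((real r + 1) * real N + 0) / (real p * real N + (real r + 1)))"
      unfolding sum_negf[symmetric]
    proof (rule sum.cong)
      fix r
      have "0 \<le> real N * real p"
        by simp
      hence "0 < real N * real p + real r + 1"
        by linarith
      thus "real p * real N ^ 2 * (1 / (real N * real p + real r + 1)) - real N
          = - (((real r + 1) * real N + 0) / (real p * real N + (real r + 1)))"
        by (simp add: field_simps power2_eq_square)
    qed simp
    finally show ?thesis
      by (simp add: theta_potential_def mult.commute)
  qed
  moreover have "(\<lambda>N. - (\<Sum>r<p. ((real r + 1) * real N + 0) / (real p * real N + (real r + 1)))
      - (0 * real N + 1) / (1 * real N + 1) - (real p - 1) / 2 * ((0 * real N + 1) / (real p * real N + 1)))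
    \<longlonglongrightarrow> - (\<Sum>r<p. (real r + 1) / real p) - 0 / 1 - (real p - 1) / 2 * (0 / real p)"
    using assms by (intro tendsto_intros LIMSEQ_linear_fraction) auto
  moreover have "(\<Sum>r<p. real r + 1) = real p * (real p + 1) / 2"
    by (induction p) (simp_all add: field_simps)
  hence "- (\<Sum>r<p. (real r + 1) / real p) - 0 / 1 - (real p - 1) / 2 * (0 / real p) = theta_potential p 0"
    using assms by (simp add: theta_potential_def sum_divide_distrib[symmetric] field_simps)
  ultimately show ?thesis
    by simp
qed

theorem proposition2p2:
  fixes p :: nat
  assumes "p \<ge> 2"
  shows "summable (\<lambda>i. \<Sum>r<p. theta p i r) \<and>
         c0 1 p = real p * (real p - 1) * (real p - 2) / (2 * pi) *
                  (\<Sum>i. \<Sum>r<p. theta p i r)"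
proof
  define C where "C = real p * (real p - 1) * (real p - 2) / 2"
  from assms have "0 < p"
    by simp
  show summable: "summable (\<lambda>i. \<Sum>r<p. theta p i r)"
    using \<open>0 < p\<close> by (rule summable_theta_block)
  have "(\<lambda>N. \<Sum>i<N. C * (\<Sum>r<p. theta p i r)) \<longlonglongrightarrow> C * (\<Sum>i. \<Sum>r<p. theta p i r)"
    unfolding sum_distrib_left[symmetric] using summable by (intro tendsto_mult_left summable_LIMSEQ)
  moreover have "(\<Sum>i<N. C * (\<Sum>r<p. theta p i r))
      = (\<Sum>i<N. c0_series_term p i) + (theta_potential p 0 - theta_potential p N)" for N
    unfolding C_def theta_block_telescoping[OF \<open>0 < p\<close>] add_diff_eq[symmetric]
    by (simp only: sum.distrib sum_lessThan_telescope')
  moreover have "(\<lambda>N. (\<Sum>i<N. c0_series_term p i) + (theta_potential p 0 - theta_potential p N))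
      \<longlonglongrightarrow> pi * c0 1 p + (theta_potential p 0 - theta_potential p 0)"
    using \<open>0 < p\<close> by (intro tendsto_intros c0_series_LIMSEQ theta_potential_LIMSEQ)
  ultimately have "C * (\<Sum>i. \<Sum>r<p. theta p i r) = pi * c0 1 p"
    using LIMSEQ_unique by force
  thus "c0 1 p = real p * (real p - 1) * (real p - 2) / (2 * pi) * (\<Sum>i. \<Sum>r<p. theta p i r)"
    by (simp add: C_def field_simps)
qed

end
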